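(* Let $f:2^V\to\mathbb{R}$ be a monotone non-decreasing submodular function with $f(\emptyset)=0$. Then for every $x\in[0,1]^n$ and every permutation $\sigma$ of $V$, $$d_{\hat f}(x\|\sigma)\le \epsilon\, n\Big(\max_{j\in V} f(\{j\})-\min_{j\in V} f(j\mid V\setminus\{j\})\Big)\le \epsilon\, n\max_{j\in V} f(\{j\}),$$ where $\epsilon=\max_{i,j\in V}|x_i-x_j|$ and $f(j\mid A)=f(A\cup\{j\})-f(A)$.
   Context: Let $V=\{1,\dots,n\}$. A permutation $\sigma$ is a bijection $V\to V$, where $\sigma(i)$ is the element placed at rank $i$. Write $S^\sigma_0=\emptyset$, $S^\sigma_j=\{\sigma(1),\dots,\sigma(j)\}$. For $f:2^V\to\mathbb{R}$ define $h^f_\sigma\in\mathbb{R}^n$ by $h^f_\sigma(\sigma(j))=f(S^\sigma_j)-f(S^\sigma_{j-1})$. For $x\in\mathbb{R}^n$, $\sigma_x$ orders $x$ if $x(\sigma_x(1))\ge\cdots\ge x(\sigma_x(n))$; the Lovász extension is $\hat f(x)=\langle x,h^f_{\sigma_x}\rangle$ (independent of the choice of $\sigma_x$). The LB divergence is $d_{\hat f}(x\|\sigma)=\hat f(x)-\langle x,h^f_\sigma\rangle$ for $x\in[0,1]^n$. *)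

theory Defs
  imports Complex_Main
begin

text \<open>Ground set V = {1..n}; set functions f :: nat set => real on subsets of V;
 vectors x in R^n as functions nat => real (only values on {1..n} matter);
 permutations as bijections of {1..n}.\<close>

definition is_perm :: "nat \<Rightarrow> (nat \<Rightarrow> nat) \<Rightarrow> bool" where
  "is_perm n \<sigma> \<longleftrightarrow> bij_betw \<sigma> {1..n} {1..n}"

definition prefix_set :: "(nat \<Rightarrow> nat) \<Rightarrow> nat \<Rightarrow> nat set" where
  "prefix_set \<sigma> j = \<sigma> ` {1..j}"

definition hvec :: "nat \<Rightarrow> (nat set \<Rightarrow> real) \<Rightarrow> (nat \<Rightarrow> nat) \<Rightarrow> nat \<Rightarrow> real" where
  "hvec n f \<sigma> i = (let j = inv_into {1..n} \<sigma> i in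
       f (prefix_set \<sigma> j) - f (prefix_set \<sigma> (j - 1)))"

definition inner_n :: "nat \<Rightarrow> (nat \<Rightarrow> real) \<Rightarrow> (nat \<Rightarrow> real) \<Rightarrow> real" where
  "inner_n n x y = (\<Sum>i\<in>{1..n}. x i * y i)"

definition orders :: "nat \<Rightarrow> (nat \<Rightarrow> real) \<Rightarrow> (nat \<Rightarrow> nat) \<Rightarrow> bool" where
  "orders n x \<sigma> \<longleftrightarrow> is_perm n \<sigma> \<and> (\<forall>i\<in>{1..n}. \<forall>j\<in>{1..n}. i \<le> j \<longrightarrow> x (\<sigma> i) \<ge> x (\<sigma> j))"

definition lovasz :: "nat \<Rightarrow> (nat set \<Rightarrow> real) \<Rightarrow> (nat \<Rightarrow> real) \<Rightarrow> real" where
  "lovasz n f x = inner_n n x (hvec n f (SOME \<sigma>. orders n x \<sigma>))"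

definition LB_div :: "nat \<Rightarrow> (nat set \<Rightarrow> real) \<Rightarrow> (nat \<Rightarrow> real) \<Rightarrow> (nat \<Rightarrow> nat) \<Rightarrow> real" where
  "LB_div n f x \<sigma> = lovasz n f x - inner_n n x (hvec n f \<sigma>)"

definition monotone_setfun :: "nat \<Rightarrow> (nat set \<Rightarrow> real) \<Rightarrow> bool" where
  "monotone_setfun n f \<longleftrightarrow> (\<forall>A B. A \<subseteq> B \<and> B \<subseteq> {1..n} \<longrightarrow> f A \<le> f B)"

definition submodular :: "nat \<Rightarrow> (nat set \<Rightarrow> real) \<Rightarrow> bool" where
  "submodular n f \<longleftrightarrow> (\<forall>A B. A \<subseteq> {1..n} \<and> B \<subseteq> {1..n} \<longrightarrow>
      f (A \<union> B) + f (A \<inter> B) \<le> f A + f B)"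

definition marginal :: "(nat set \<Rightarrow> real) \<Rightarrow> nat \<Rightarrow> nat set \<Rightarrow> real" where
  "marginal f j A = f (A \<union> {j}) - f A"

end

theory Submission
  imports Defs
begin

text \<open>Both \<open>lovasz n f x\<close> and \<open>\<langle>x, h\<^sub>\<sigma>\<rangle>\<close> pair \<open>x\<close> with the greedy vector of some
  permutation, and every greedy vector sums to \<open>f V\<close>. Hence \<open>x\<close> may be shifted by its minimum,
  leaving weights in \<open>[0, \<epsilon>]\<close>. By submodularity every entry \<open>h\<^sub>\<tau> i\<close> lies between
  \<open>f(i | V - {i})\<close> and \<open>f {i}\<close>, so two greedy vectors differ entrywise by at most
  \<open>max f {j} - min f(j | V - {j})\<close>; monotonicity makes the subtracted term non-negative.\<close>

lemma submodularD:
  "submodular n f \<Longrightarrow> A \<subseteq> {1..n} \<Longrightarrow> B \<subseteq> {1..n} \<Longrightarrow> f (A \<union> B) + f (A \<inter> B) \<le> f A + f B"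
  unfolding submodular_def by blast

lemma monotone_setfunD:
  "monotone_setfun n f \<Longrightarrow> A \<subseteq> B \<Longrightarrow> B \<subseteq> {1..n} \<Longrightarrow> f A \<le> f B"
  unfolding monotone_setfun_def by blast

lemma submodular_marginal_antimono:
  assumes "submodular n f" "A \<subseteq> B" "B \<subseteq> {1..n}" "k \<in> {1..n}" "k \<notin> B"
  shows "marginal f k B \<le> marginal f k A"
proof -
  have "A \<union> {k} \<subseteq> {1..n}" using assms by auto
  then have "f ((A \<union> {k}) \<union> B) + f ((A \<union> {k}) \<inter> B) \<le> f (A \<union> {k}) + f B"
    by (rule submodularD[OF assms(1) _ assms(3)])
  moreover have "(A \<union> {k}) \<union> B = B \<union> {k}" "(A \<union> {k}) \<inter> B = A"
    using assms by auto
  ultimately show ?thesis unfolding marginal_def by simp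
qed

lemma monotone_marginal_nonneg:
  assumes "monotone_setfun n f" "A \<union> {j} \<subseteq> {1..n}"
  shows "0 \<le> marginal f j A"
  using monotone_setfunD[OF assms(1) Un_upper1 assms(2)] by (simp add: marginal_def)

lemma perm_prefix_set_Suc:
  assumes "is_perm n \<tau>" "j \<in> {1..n}"
  shows "prefix_set \<tau> j = prefix_set \<tau> (j - 1) \<union> {\<tau> j}"
    and "prefix_set \<tau> (j - 1) \<subseteq> {1..n}"
    and "\<tau> j \<notin> prefix_set \<tau> (j - 1)"
proof -
  have inj: "inj_on \<tau> {1..n}" and img: "\<tau> ` {1..n} = {1..n}"
    using assms(1) by (auto simp: is_perm_def bij_betw_def)
  have "{1..j} = insert j {1..j - 1}" using assms(2) by auto
  then show "prefix_set \<tau> j = prefix_set \<tau> (j - 1) \<union> {\<tau> j}"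
    unfolding prefix_set_def by auto
  have "\<tau> ` {1..j - 1} \<subseteq> \<tau> ` {1..n}"
    using assms(2) by (intro image_mono) auto
  then show "prefix_set \<tau> (j - 1) \<subseteq> {1..n}"
    using img unfolding prefix_set_def by simp
  have "{1..j - 1} \<subseteq> {1..n}" using assms(2) by auto
  from inj_on_image_mem_iff[OF inj assms(2) this]
  show "\<tau> j \<notin> prefix_set \<tau> (j - 1)"
    unfolding prefix_set_def by auto
qed

lemma hvec_perm_apply:
  assumes "is_perm n \<tau>" "j \<in> {1..n}"
  shows "hvec n f \<tau> (\<tau> j) = marginal f (\<tau> j) (prefix_set \<tau> (j - 1))"
proof -
  have "inv_into {1..n} \<tau> (\<tau> j) = j"
    using assms by (meson bij_betw_imp_inj_on inv_into_f_f is_perm_def)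
  then show ?thesis
    using perm_prefix_set_Suc(1)[OF assms] by (simp add: hvec_def marginal_def)
qed

lemma sum_hvec_perm:
  assumes "is_perm n \<tau>" "f {} = 0"
  shows "(\<Sum>i\<in>{1..n}. hvec n f \<tau> i) = f {1..n}"
proof -
  have bij: "bij_betw \<tau> {1..n} {1..n}" using assms(1) by (simp add: is_perm_def)
  have "(\<Sum>i\<in>{1..n}. hvec n f \<tau> i) = (\<Sum>j\<in>{1..n}. hvec n f \<tau> (\<tau> j))"
    using sum.reindex_bij_betw[OF bij, of "hvec n f \<tau>"] by simp
  also have "\<dots> = (\<Sum>j\<in>{1..n}. f (prefix_set \<tau> j) - f (prefix_set \<tau> (j - 1)))"
    using hvec_perm_apply[OF assms(1)] perm_prefix_set_Suc(1)[OF assms(1)]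
    by (simp add: marginal_def)
  also have "\<dots> = f (prefix_set \<tau> n) - f (prefix_set \<tau> 0)"
    by (induction n) (auto simp: sum.cl_ivl_Suc)
  also have "\<dots> = f {1..n}"
    using bij assms(2) by (simp add: prefix_set_def bij_betw_def)
  finally show ?thesis .
qed

lemma hvec_between_marginals:
  assumes "is_perm n \<tau>" "submodular n f" "f {} = 0" "i \<in> {1..n}"
  shows "marginal f i ({1..n} - {i}) \<le> hvec n f \<tau> i" "hvec n f \<tau> i \<le> f {i}"
proof -
  have "i \<in> \<tau> ` {1..n}" using assms(1,4) by (simp add: is_perm_def bij_betw_def)
  then obtain j where j: "j \<in> {1..n}" "i = \<tau> j" by blast
  note prefix = perm_prefix_set_Suc[OF assms(1) j(1)]
  have h: "hvec n f \<tau> i = marginal f i (prefix_set \<tau> (j - 1))"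
    using hvec_perm_apply[OF assms(1) j(1)] j(2) by simp
  show "marginal f i ({1..n} - {i}) \<le> hvec n f \<tau> i"
    unfolding h by (rule submodular_marginal_antimono[OF assms(2)]) (use prefix j assms(4) in auto)
  have "marginal f i (prefix_set \<tau> (j - 1)) \<le> marginal f i {}"
    by (rule submodular_marginal_antimono[OF assms(2)]) (use prefix j assms(4) in auto)
  then show "hvec n f \<tau> i \<le> f {i}"
    using h assms(3) by (simp add: marginal_def)
qed

lemma orders_exists: "\<exists>\<sigma>. orders n x \<sigma>"
proof -
  define xs where "xs = sort_key (\<lambda>i. - x i) [1..<n+1]"
  have len: "length xs = n" and dist: "distinct xs" and set_xs: "set xs = {1..n}"
    by (auto simp: xs_def)
  have sorted_xs: "sorted (map (\<lambda>i. - x i) xs)"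
    unfolding xs_def by (rule sorted_sort_key)
  define \<sigma> where "\<sigma> i = xs ! (i - 1)" for i
  have shift: "{1..n} = Suc ` {0..<n}"
    by (simp add: image_Suc_atLeastLessThan atLeastLessThanSuc_atLeastAtMost)
  have "\<sigma> ` {1..n} = (\<lambda>k. xs ! k) ` {0..<n}"
    unfolding shift image_image \<sigma>_def by simp
  also have "\<dots> = set xs"
    using len by (auto simp: set_conv_nth)
  finally have "\<sigma> ` {1..n} = set xs" .
  moreover have "inj_on \<sigma> {1..n}"
    unfolding inj_on_def \<sigma>_def using dist len by (auto simp: nth_eq_iff_index_eq)
  ultimately have "is_perm n \<sigma>"
    using set_xs by (simp add: is_perm_def bij_betw_def)
  moreover have "x (\<sigma> j) \<le> x (\<sigma> i)" if "i \<in> {1..n}" "j \<in> {1..n}" "i \<le> j" for i j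
    using sorted_nth_mono[OF sorted_xs, of "i - 1" "j - 1"] that len by (auto simp: \<sigma>_def)
  ultimately show ?thesis unfolding orders_def by blast
qed

lemma lovasz_eq_greedy: "\<exists>\<tau>. is_perm n \<tau> \<and> lovasz n f x = inner_n n x (hvec n f \<tau>)"
  using someI_ex[OF orders_exists] unfolding lovasz_def orders_def by blast

lemma hvec_diff_le:
  assumes "is_perm n \<tau>" "is_perm n \<sigma>" "submodular n f" "f {} = 0" "i \<in> {1..n}"
  shows "hvec n f \<tau> i - hvec n f \<sigma> i
    \<le> Max ((\<lambda>j. f {j}) ` {1..n}) - Min ((\<lambda>j. marginal f j ({1..n} - {j})) ` {1..n})"
proof -
  have "f {i} \<le> Max ((\<lambda>j. f {j}) ` {1..n})"
    and "Min ((\<lambda>j. marginal f j ({1..n} - {j})) ` {1..n}) \<le> marginal f i ({1..n} - {i})"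
    using assms(5) by auto
  then show ?thesis
    using hvec_between_marginals[OF assms(1,3,4,5)] hvec_between_marginals[OF assms(2,3,4,5)]
    by linarith
qed

lemma Min_marginal_nonneg:
  assumes "monotone_setfun n f" "n \<noteq> 0"
  shows "0 \<le> Min ((\<lambda>j. marginal f j ({1..n} - {j})) ` {1..n})"
  using monotone_marginal_nonneg[OF assms(1)] assms(2) by (subst Min_ge_iff) auto

lemma abs_diff_le_spread:
  fixes x :: "'a \<Rightarrow> real"
  assumes "finite V" "i \<in> V" "j \<in> V"
  shows "\<bar>x i - x j\<bar> \<le> Max {\<bar>x i - x j\<bar> | i j. i \<in> V \<and> j \<in> V}"
proof (rule Max_ge)
  show "finite {\<bar>x i - x j\<bar> | i j. i \<in> V \<and> j \<in> V}"
    using assms(1) by (intro finite_image_set2) auto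
qed (use assms in blast)

text \<open>Subtracting \<open>c = min x\<close> leaves the difference unchanged because \<open>h\<close> and \<open>g\<close> have equal
  sums; afterwards every weight \<open>x i - c\<close> lies in \<open>[0, \<epsilon>]\<close>.\<close>
lemma inner_diff_le_spread:
  fixes x h g :: "'a \<Rightarrow> real"
  assumes "finite V" "sum h V = sum g V" "0 \<le> D"
    and spread: "\<And>i j. i \<in> V \<Longrightarrow> j \<in> V \<Longrightarrow> \<bar>x i - x j\<bar> \<le> \<epsilon>"
    and diff: "\<And>i. i \<in> V \<Longrightarrow> h i - g i \<le> D"
  shows "(\<Sum>i\<in>V. x i * h i) - (\<Sum>i\<in>V. x i * g i) \<le> \<epsilon> * card V * D"
proof (cases "V = {}")
  case False
  define c where "c = Min (x ` V)"
  have "c \<in> x ` V"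
    unfolding c_def using False assms(1) by (intro Min_in) auto
  then obtain k where k: "k \<in> V" "x k = c" by blast
  have weight: "0 \<le> x i - c" "x i - c \<le> \<epsilon>" if "i \<in> V" for i
    using that assms(1) spread[OF that k(1)] k(2) by (auto simp: c_def)
  have "(\<Sum>i\<in>V. x i * h i) - (\<Sum>i\<in>V. x i * g i) = (\<Sum>i\<in>V. (x i - c) * (h i - g i))
      + c * (sum h V - sum g V)"
    by (simp add: sum_subtractf sum_distrib_left sum.distrib algebra_simps)
  also have "\<dots> = (\<Sum>i\<in>V. (x i - c) * (h i - g i))"
    using assms(2) by simp
  also have "\<dots> \<le> (\<Sum>i\<in>V. \<epsilon> * D)"
  proof (rule sum_mono)
    fix i assume i: "i \<in> V"
    have "(x i - c) * (h i - g i) \<le> (x i - c) * D"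
      using diff[OF i] weight(1)[OF i] by (rule mult_left_mono)
    also have "\<dots> \<le> \<epsilon> * D"
      using weight(2)[OF i] assms(3) by (rule mult_right_mono)
    finally show "(x i - c) * (h i - g i) \<le> \<epsilon> * D" .
  qed
  also have "\<dots> = \<epsilon> * card V * D"
    by simp
  finally show ?thesis .
qed simp

theorem mainTheorem7:
  fixes n :: nat and f :: "nat set \<Rightarrow> real" and x :: "nat \<Rightarrow> real" and \<sigma> :: "nat \<Rightarrow> nat"
  assumes "monotone_setfun n f" and "submodular n f" and "f {} = 0"
    and "\<forall>i\<in>{1..n}. 0 \<le> x i \<and> x i \<le> 1"
    and "is_perm n \<sigma>"
  defines "\<epsilon> \<equiv> Max {\<bar>x i - x j\<bar> | i j. i \<in> {1..n} \<and> j \<in> {1..n}}"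
  shows "LB_div n f x \<sigma> \<le> \<epsilon> * real n * (Max ((\<lambda>j. f {j}) ` {1..n})
              - Min ((\<lambda>j. marginal f j ({1..n} - {j})) ` {1..n}))
    \<and> \<epsilon> * real n * (Max ((\<lambda>j. f {j}) ` {1..n})
              - Min ((\<lambda>j. marginal f j ({1..n} - {j})) ` {1..n}))
      \<le> \<epsilon> * real n * Max ((\<lambda>j. f {j}) ` {1..n})"
proof (cases "n = 0")
  case True
  then show ?thesis by (simp add: LB_div_def lovasz_def inner_n_def)
next
  case False
  let ?V = "{1..n}"
  let ?D = "Max ((\<lambda>j. f {j}) ` ?V) - Min ((\<lambda>j. marginal f j (?V - {j})) ` ?V)"
  obtain \<tau> where \<tau>: "is_perm n \<tau>" and lovasz: "lovasz n f x = inner_n n x (hvec n f \<tau>)"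
    using lovasz_eq_greedy by blast
  have "1 \<in> ?V" using False by simp
  have "0 \<le> ?D"
    using hvec_diff_le[OF assms(5,5,2,3) \<open>1 \<in> ?V\<close>] by simp
  have spread: "\<bar>x i - x j\<bar> \<le> \<epsilon>" if "i \<in> ?V" "j \<in> ?V" for i j
    unfolding \<epsilon>_def using that by (intro abs_diff_le_spread) auto
  have "LB_div n f x \<sigma> \<le> \<epsilon> * card ?V * ?D"
    unfolding LB_div_def lovasz inner_n_def
  proof (rule inner_diff_le_spread[OF finite_atLeastAtMost _ \<open>0 \<le> ?D\<close>])
    show "sum (hvec n f \<tau>) ?V = sum (hvec n f \<sigma>) ?V"
      using sum_hvec_perm[of n _ f] \<tau> assms(3,5) by simp
  qed (fact spread hvec_diff_le[OF \<tau> assms(5,2,3)])+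
  moreover have "\<epsilon> * real n * ?D \<le> \<epsilon> * real n * Max ((\<lambda>j. f {j}) ` ?V)"
    using Min_marginal_nonneg[OF assms(1) False] spread[OF \<open>1 \<in> ?V\<close> \<open>1 \<in> ?V\<close>]
    by (intro mult_left_mono) auto
  ultimately show ?thesis by simp
qed

end
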